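(* Let $Z$ be a stationary and isotropic centered unit variance Gaussian random field on $\mathbb{R}^d$ with covariance $\mathbb{E}[Z(x)Z(y)]=R(\|x-y\|)$, where $R:[0,\infty)\rightarrow\mathbb{R}$ is continuous, and let $\Xi_0=\{x:\,Z(x)\geq0\}$. Then the function $h\mapsto k_{mm}(\|h\|)$ of $(\Xi_0,Z)$ is positive definite on $\mathbb{R}^d$ if and only if $R\equiv1$.
   Context: $k_{mm}(\|h\|)=\overline{m}^{-2}\,\mathbb{E}[Z(o)Z(h)\mid Z(o)\geq0,Z(h)\geq0]$ with $\overline{m}=\mathbb{E}[Z(o)\mid Z(o)\geq0]$. A function $f:\mathbb{R}^d\rightarrow\mathbb{R}$ is positive definite if $\sum_{i,j=1}^n a_ia_jf(x_i-x_j)\geq0$ for all $n$, $x_i\in\mathbb{R}^d$, $a_i\in\mathbb{R}$. *)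

theory Defs
  imports "HOL-Probability.Probability"
begin

definition gaussian_rv :: "'a measure \<Rightarrow> ('a \<Rightarrow> real) \<Rightarrow> bool" where
  "gaussian_rv M X \<longleftrightarrow> X \<in> borel_measurable M \<and>
     ((\<exists>\<mu> \<sigma>. 0 < \<sigma> \<and> distributed M lborel X (normal_density \<mu> \<sigma>))
      \<or> (\<exists>c. AE \<omega> in M. X \<omega> = c))"

definition gaussian_field :: "'a measure \<Rightarrow> ('i \<Rightarrow> 'a \<Rightarrow> real) \<Rightarrow> bool" where
  "gaussian_field M Z \<longleftrightarrow>
     (\<forall>S a. finite S \<longrightarrow> gaussian_rv M (\<lambda>\<omega>. \<Sum>x\<in>S. a x * Z x \<omega>))"

definition cond_exp_ev :: "'a measure \<Rightarrow> ('a \<Rightarrow> real) \<Rightarrow> 'a set \<Rightarrow> real" where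
  "cond_exp_ev M X A = (\<integral>\<omega>. indicator A \<omega> * X \<omega> \<partial>M) / measure M A"

definition kmm :: "'a measure \<Rightarrow> ('v::zero \<Rightarrow> 'a \<Rightarrow> real) \<Rightarrow> 'v \<Rightarrow> real" where
  "kmm M Z h =
     cond_exp_ev M (\<lambda>\<omega>. Z 0 \<omega> * Z h \<omega>) {\<omega>\<in>space M. Z 0 \<omega> \<ge> 0 \<and> Z h \<omega> \<ge> 0}
     / (cond_exp_ev M (Z 0) {\<omega>\<in>space M. Z 0 \<omega> \<ge> 0})\<^sup>2"

definition positive_definite :: "('v::ab_group_add \<Rightarrow> real) \<Rightarrow> bool" where
  "positive_definite f \<longleftrightarrow>
     (\<forall>(n::nat) (x::nat \<Rightarrow> 'v) (a::nat \<Rightarrow> real).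
        (\<Sum>i<n. \<Sum>j<n. a i * a j * f (x i - x j)) \<ge> 0)"

end

theory Submission
  imports Defs "HOL-Real_Asymp.Real_Asymp"
begin

text \<open>
  If \<open>R \<equiv> 1\<close>, every \<open>Z(h)\<close> coincides almost surely with \<open>Z(o)\<close>, so \<open>k\<^sub>m\<^sub>m\<close> is a nonnegative
  constant and hence positive definite. Conversely, suppose \<open>R(t) < 1\<close> for some \<open>t\<close>. By continuity
  there is \<open>h\<close> whose correlation \<open>\<rho> = R(\<parallel>h\<parallel>)\<close> lies in \<open>(0.99, 1)\<close>. Writing
  \<open>Z(h) = \<rho> Z(o) + \<surd>(1 - \<rho>\<^sup>2) W\<close> with \<open>W\<close> standard normal and independent of \<open>Z(o)\<close>, an
  explicit Gaussian integral gives
  \<open>E[Z(o)Z(h); Z(o), Z(h) \<ge> 0] = \<rho> P + \<surd>(1 - \<rho>\<^sup>2) / (2\<pi>)\<close> with \<open>P = P(Z(o), Z(h) \<ge> 0) \<le> 1\<close>,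
  while \<open>E[Z(o)\<^sup>2; Z(o) \<ge> 0] = P(Z(o) \<ge> 0)\<close>. Since \<open>1 - \<rho> < \<surd>(1 - \<rho>\<^sup>2) / (2\<pi>)\<close> for such
  \<open>\<rho>\<close>, this gives \<open>k\<^sub>m\<^sub>m(h) > k\<^sub>m\<^sub>m(0)\<close>, and the points \<open>h, 0\<close> with weights \<open>1, -1\<close>
  violate positive definiteness.

  Independence of \<open>Z(o)\<close> and \<open>W\<close> is derived from their being uncorrelated by Levy's uniqueness
  theorem, applied to the laws of \<open>Z(o)\<close> and \<open>W\<close> under suitably reweighted probability measures.
\<close>

lemma integrable_mult_of_square_integrable:
  fixes X Y :: "'a \<Rightarrow> real"
  assumes [measurable]: "X \<in> borel_measurable M" "Y \<in> borel_measurable M"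
    and "integrable M (\<lambda>\<omega>. X \<omega> * X \<omega>)" "integrable M (\<lambda>\<omega>. Y \<omega> * Y \<omega>)"
  shows "integrable M (\<lambda>\<omega>. X \<omega> * Y \<omega>)"
proof (rule Bochner_Integration.integrable_bound[of _ "\<lambda>\<omega>. X \<omega> * X \<omega> + Y \<omega> * Y \<omega>"])
  show "integrable M (\<lambda>\<omega>. X \<omega> * X \<omega> + Y \<omega> * Y \<omega>)" using assms by simp
  have "\<bar>X \<omega> * Y \<omega>\<bar> \<le> X \<omega> * X \<omega> + Y \<omega> * Y \<omega>" for \<omega>
  proof -
    have "2 * \<bar>X \<omega>\<bar> * \<bar>Y \<omega>\<bar> \<le> X \<omega> * X \<omega> + Y \<omega> * Y \<omega>"
      using sum_squares_bound[of "\<bar>X \<omega>\<bar>" "\<bar>Y \<omega>\<bar>"] by (simp add: power2_eq_square)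
    moreover have "0 \<le> \<bar>X \<omega>\<bar> * \<bar>Y \<omega>\<bar>" by simp
    ultimately show ?thesis unfolding abs_mult by linarith
  qed
  then show "AE \<omega> in M. norm (X \<omega> * Y \<omega>) \<le> norm (X \<omega> * X \<omega> + Y \<omega> * Y \<omega>)"
    by simp
qed simp

lemma (in finite_measure) integrable_abs_bounded:
  fixes f :: "'a \<Rightarrow> real"
  assumes "f \<in> borel_measurable M" "\<And>\<omega>. \<bar>f \<omega>\<bar> \<le> B"
  shows "integrable M f"
  using assms by (intro integrable_const_bound[where B = B]) auto

lemma (in finite_measure) integrable_cos [simp]:
  fixes f :: "'a \<Rightarrow> real"
  assumes "f \<in> borel_measurable M"
  shows "integrable M (\<lambda>\<omega>. cos (f \<omega>))"
  using assms by (intro integrable_abs_bounded[where B = 1]) (simp_all add: abs_cos_le_one)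

lemma (in finite_measure) integrable_sin [simp]:
  fixes f :: "'a \<Rightarrow> real"
  assumes "f \<in> borel_measurable M"
  shows "integrable M (\<lambda>\<omega>. sin (f \<omega>))"
  using assms by (intro integrable_abs_bounded[where B = 1]) (simp_all add: abs_sin_le_one)

lemma (in prob_space) emeasure_eq_integral_indicator:
  "S \<in> sets M \<Longrightarrow> emeasure M S = ennreal (\<integral>\<omega>. indicator S \<omega> \<partial>M)"
  by (simp add: emeasure_eq_measure)

lemma (in prob_space) measure_pos_if_integral_indicator_nonzero:
  fixes f :: "'a \<Rightarrow> real"
  assumes "S \<in> sets M" "(\<integral>\<omega>. indicator S \<omega> * f \<omega> \<partial>M) \<noteq> 0"
  shows "0 < measure M S"
proof (rule ccontr)
  assume "\<not> 0 < measure M S"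
  then have "measure M S = 0" using measure_nonneg[of M S] by linarith
  then have "S \<in> null_sets M" using assms(1) by (simp add: null_sets_def emeasure_eq_measure)
  then have "AE \<omega> in M. indicator S \<omega> * f \<omega> = 0"
    by (rule AE_mp[OF AE_not_in]) (simp add: AE_I2)
  then have "(\<integral>\<omega>. indicator S \<omega> * f \<omega> \<partial>M) = 0" by (rule integral_eq_zero_AE)
  with assms(2) show False by contradiction
qed

lemma prob_space_density_integral_eq_1:
  assumes "prob_space M" and [measurable]: "g \<in> borel_measurable M"
    and "\<And>\<omega>. 0 \<le> g \<omega>" "integrable M g" "(\<integral>\<omega>. g \<omega> \<partial>M) = 1"
  shows "prob_space (density M g)"
proof (rule prob_spaceI)
  have "emeasure (density M g) (space (density M g)) = (\<integral>\<^sup>+\<omega>. ennreal (g \<omega>) \<partial>M)"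
    by (simp add: emeasure_density nn_integral_set_ennreal[symmetric])
  also have "\<dots> = 1"
    using assms by (simp add: nn_integral_eq_integral)
  finally show "emeasure (density M g) (space (density M g)) = 1" .
qed

lemma integral_indicator_positive_quadrant:
  "(\<integral>\<omega>. indicator {\<omega>\<in>space M. 0 \<le> X \<omega> \<and> 0 \<le> Y \<omega>} \<omega> * f \<omega> \<partial>M)
    = (\<integral>\<omega>. indicator {0..} (X \<omega>) * indicator {0..} (Y \<omega>) * f \<omega> \<partial>M)"
  for f :: "'a \<Rightarrow> real"
  by (rule Bochner_Integration.integral_cong) (auto simp: indicator_def)

section \<open>Standard normal variables\<close>

lemma gaussian_rv_std_normal:
  assumes "prob_space M" and "gaussian_rv M Z"
    and mean: "(\<integral>\<omega>. Z \<omega> \<partial>M) = 0" and var: "(\<integral>\<omega>. Z \<omega> * Z \<omega> \<partial>M) = 1"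
  shows "distributed M lborel Z std_normal_density"
proof -
  interpret prob_space M by fact
  from \<open>gaussian_rv M Z\<close> have [measurable]: "Z \<in> borel_measurable M"
    and cases: "(\<exists>\<mu> \<sigma>. 0 < \<sigma> \<and> distributed M lborel Z (normal_density \<mu> \<sigma>)) \<or> (\<exists>c. AE \<omega> in M. Z \<omega> = c)"
    unfolding gaussian_rv_def by auto
  show ?thesis
  proof (cases "\<exists>c. AE \<omega> in M. Z \<omega> = c")
    case True
    then obtain c where c: "AE \<omega> in M. Z \<omega> = c" by blast
    have "(\<integral>\<omega>. Z \<omega> \<partial>M) = (\<integral>\<omega>. c \<partial>M)"
      by (rule integral_cong_AE) (use c in auto)
    moreover have "(\<integral>\<omega>. Z \<omega> * Z \<omega> \<partial>M) = (\<integral>\<omega>. c * c \<partial>M)"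
      by (rule integral_cong_AE) (use c in auto)
    ultimately show ?thesis using mean var by (simp add: prob_space)
  next
    case False
    then obtain \<mu> \<sigma> where "0 < \<sigma>" and D: "distributed M lborel Z (normal_density \<mu> \<sigma>)"
      using cases by blast
    have "\<mu> = 0" using normal_distributed_expectation[OF \<open>0 < \<sigma>\<close> D] mean by simp
    moreover have "\<sigma>\<^sup>2 = 1"
      using normal_distributed_variance[OF \<open>0 < \<sigma>\<close> D] mean var by (simp add: power2_eq_square)
    ultimately show ?thesis using D \<open>0 < \<sigma>\<close> by (simp add: power2_eq_1_iff)
  qed
qed

lemma char_std_normal_rv:
  assumes "distributed M lborel Z std_normal_density"
  shows "(CLINT \<omega>|M. iexp (t * Z \<omega>)) = exp (- t\<^sup>2 / 2)"
proof -
  have [measurable]: "Z \<in> borel_measurable M" and law: "distr M lborel Z = std_normal_distribution"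
    using assms by (auto simp: distributed_def)
  have "(CLINT \<omega>|M. iexp (t * Z \<omega>)) = char (distr M lborel Z) t"
    unfolding char_def by (rule integral_distr[symmetric]) auto
  then show ?thesis by (simp only: law char_std_normal_distribution)
qed

lemma distr_eq_std_normal_if_char:
  assumes "prob_space D" and [measurable]: "Y \<in> borel_measurable D"
    and char: "\<And>u. (CLINT \<omega>|D. iexp (u * Y \<omega>)) = exp (- u\<^sup>2 / 2)"
  shows "distr D lborel Y = std_normal_distribution"
proof (rule Levy_uniqueness)
  show "real_distribution (distr D lborel Y)"
    using prob_space.prob_space_distr[OF assms(1), of Y lborel]
    by (auto simp: real_distribution_def real_distribution_axioms_def)
  show "char (distr D lborel Y) = char std_normal_distribution"
  proof
    fix u
    have "char (distr D lborel Y) u = (CLINT \<omega>|D. iexp (u * Y \<omega>))"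
      unfolding char_def by (rule integral_distr) auto
    then show "char (distr D lborel Y) u = char std_normal_distribution u"
      by (simp only: char char_std_normal_distribution)
  qed
qed (rule real_dist_normal_dist)

text \<open>
  Reweighting by \<open>g\<close> leaves the characteristic function of \<open>Y\<close>, hence its law, unchanged.
  This replaces a uniqueness theorem for multivariate characteristic functions, which is not
  available: it is how independence of uncorrelated Gaussians is proved below.
\<close>

lemma reweighted_std_normal_indicator:
  assumes "prob_space M" and [measurable]: "Y \<in> borel_measurable M" "g \<in> borel_measurable M"
    and law: "distr M lborel Y = std_normal_distribution"
    and g_nonneg: "\<And>\<omega>. 0 \<le> g \<omega>" and g_int: "integrable M g"
    and cos: "\<And>u. (\<integral>\<omega>. g \<omega> * cos (u * Y \<omega>) \<partial>M) = exp (- u\<^sup>2 / 2)"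
    and sin: "\<And>u. (\<integral>\<omega>. g \<omega> * sin (u * Y \<omega>) \<partial>M) = 0"
    and [measurable]: "B \<in> sets borel"
  shows "(\<integral>\<omega>. g \<omega> * indicator B (Y \<omega>) \<partial>M) = (\<integral>\<omega>. indicator B (Y \<omega>) \<partial>M :: real)"
proof -
  have "prob_space (density M g)"
    using cos[of 0] by (intro prob_space_density_integral_eq_1[OF assms(1)]) (simp_all add: g_nonneg g_int)
  then have law_g: "distr (density M g) lborel Y = std_normal_distribution"
  proof (rule distr_eq_std_normal_if_char)
    fix u
    have int: "integrable M (\<lambda>\<omega>. g \<omega> *\<^sub>R iexp (u * Y \<omega>))"
      by (rule Bochner_Integration.integrable_bound[OF g_int]) (auto simp: norm_exp_i_times g_nonneg)
    have "(CLINT \<omega>|density M g. iexp (u * Y \<omega>)) = (CLINT \<omega>|M. g \<omega> *\<^sub>R iexp (u * Y \<omega>))"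
      by (rule integral_density) (auto simp: g_nonneg)
    also have "\<dots> = Complex (\<integral>\<omega>. g \<omega> * cos (u * Y \<omega>) \<partial>M) (\<integral>\<omega>. g \<omega> * sin (u * Y \<omega>) \<partial>M)"
      using integral_Re[OF int] integral_Im[OF int] by (intro complex_eqI) (simp_all add: Re_exp Im_exp)
    finally show "(CLINT \<omega>|density M g. iexp (u * Y \<omega>)) = exp (- u\<^sup>2 / 2)"
      by (simp add: cos sin Complex_eq)
  qed simp
  have "(\<integral>\<omega>. g \<omega> * indicator B (Y \<omega>) \<partial>M) = (\<integral>\<omega>. indicator B (Y \<omega>) \<partial>density M g)"
    by (subst integral_density) (auto simp: g_nonneg)
  also have "\<dots> = (\<integral>x. indicator B x \<partial>distr (density M g) lborel Y)"
    by (rule integral_distr[symmetric]) auto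
  also have "\<dots> = (\<integral>x. indicator B x \<partial>distr M lborel Y)"
    by (simp only: law law_g)
  also have "\<dots> = (\<integral>\<omega>. indicator B (Y \<omega>) \<partial>M)"
    by (rule integral_distr) auto
  finally show ?thesis .
qed

lemma integral_indicator_Ici_FTC:
  fixes f F :: "real \<Rightarrow> real"
  assumes F: "\<And>x. (F has_real_derivative f x) (at x)"
    and f: "\<And>x. isCont f x" and "integrable lborel f"
    and lim: "(F \<longlongrightarrow> L) at_top"
  shows "(LINT x|lborel. indicator {m..} x * f x) = L - F m"
proof -
  have "continuous_on UNIV f" using f by (simp add: continuous_at_imp_continuous_on)
  then have [measurable]: "f \<in> borel_measurable borel" by (rule borel_measurable_continuous_onI)
  have "(LBINT x=ereal m..\<infinity>. f x) = L - F m"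
  proof (rule interval_integral_FTC_integrable)
    show "(F has_vector_derivative f x) (at x)" for x
      using F[of x] by (simp add: has_real_derivative_iff_has_vector_derivative)
    show "set_integrable lborel (einterval (ereal m) \<infinity>) f"
      unfolding set_integrable_def by (rule integrable_mult_indicator) (auto intro: assms(3))
    have "(F \<longlongrightarrow> F m) (at_right m)"
      using DERIV_isCont[OF F[of m]] by (simp add: isCont_def filterlim_at_split)
    then show "((F \<circ> real_of_ereal) \<longlongrightarrow> F m) (at_right (ereal m))"
      by (simp add: ereal_tendsto_simps1)
    show "((F \<circ> real_of_ereal) \<longlongrightarrow> L) (at_left \<infinity>)"
      using lim by (simp add: ereal_tendsto_simps1)
  qed (use f in auto)
  then have "(LINT x|lborel. indicator {m<..} x * f x) = L - F m"
    by (simp add: interval_integral_to_infinity_eq set_lebesgue_integral_def)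
  moreover have "(LINT x|lborel. indicator {m<..} x * f x) = (LINT x|lborel. indicator {m..} x * f x)"
    by (rule integral_cong_AE)
      (auto intro!: eventually_mono[OF AE_lborel_singleton[of m]] simp: indicator_def)
  ultimately show ?thesis by simp
qed

lemma std_normal_density_has_real_derivative:
  "(std_normal_density has_real_derivative (- x * std_normal_density x)) (at x)"
proof -
  have "std_normal_density = (\<lambda>x. exp (- x\<^sup>2 / 2) / sqrt (2 * pi))"
    by (simp add: fun_eq_iff std_normal_density_def)
  moreover have "((\<lambda>x. exp (- x\<^sup>2 / 2) / sqrt (2 * pi)) has_real_derivative
      (- x * (exp (- x\<^sup>2 / 2) / sqrt (2 * pi)))) (at x)"
    by (auto intro!: derivative_eq_intros simp: field_simps)
  ultimately show ?thesis by simp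
qed

lemma isCont_std_normal_density: "isCont std_normal_density x"
  unfolding std_normal_density_def[abs_def] by (intro continuous_intros) auto

lemma tendsto_affine_mult_std_normal_density:
  "((\<lambda>x. (a * x + b) * std_normal_density x) \<longlongrightarrow> 0) at_top"
  unfolding std_normal_density_def by real_asymp

lemma integral_Ici_std_normal_density_quadratic:
  "(LINT x|lborel. indicator {m..} x * (std_normal_density x * (x * (a * x + b) - a)))
    = std_normal_density m * (a * m + b)"
proof -
  have "(LINT x|lborel. indicator {m..} x * (std_normal_density x * (x * (a * x + b) - a)))
      = 0 - (- (a * m + b) * std_normal_density m)"
  proof (rule integral_indicator_Ici_FTC)
    show "((\<lambda>x. - (a * x + b) * std_normal_density x) has_real_derivative
        (std_normal_density x * (x * (a * x + b) - a))) (at x)" for x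
      by (auto intro!: derivative_eq_intros std_normal_density_has_real_derivative simp: algebra_simps)
    show "isCont (\<lambda>x. std_normal_density x * (x * (a * x + b) - a)) x" for x
      by (intro continuous_intros isCont_std_normal_density)
    have "integrable lborel (\<lambda>x. a * (std_normal_density x * x ^ 2) + b * (std_normal_density x * x ^ 1)
        - a * (std_normal_density x * x ^ 0))"
      using integrable_std_normal_moment[of 2] integrable_std_normal_moment[of 1] integrable_std_normal_moment[of 0]
      by (intro Bochner_Integration.integrable_add Bochner_Integration.integrable_diff integrable_mult_right) auto
    then show "integrable lborel (\<lambda>x. std_normal_density x * (x * (a * x + b) - a))"
      by (simp add: algebra_simps power2_eq_square)
    show "((\<lambda>x. - (a * x + b) * std_normal_density x) \<longlongrightarrow> 0) at_top"
      using tendsto_affine_mult_std_normal_density[of "- a" "- b"] by (simp add: algebra_simps)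
  qed
  then show ?thesis by (simp add: algebra_simps)
qed

lemma abs_positive_wedge_integrand_le:
  fixes x y :: real
  assumes "0 < r" "0 < s"
  shows "\<bar>indicator {0..} x * indicator {0..} (r * x + s * y) * (x * (r * x + s * y) - r)\<bar>
    \<le> r * (x * x) + s * \<bar>x * y\<bar> + r"
proof -
  have "\<bar>indicator {0..} x * indicator {0..} (r * x + s * y) * (x * (r * x + s * y) - r)\<bar>
      \<le> \<bar>r * (x * x) + s * (x * y) - r\<bar>"
    by (simp add: indicator_def abs_mult algebra_simps)
  moreover have "\<bar>r * (x * x)\<bar> = r * (x * x)" "\<bar>s * (x * y)\<bar> = s * \<bar>x * y\<bar>"
    using assms by (simp_all add: abs_mult)
  ultimately show ?thesis
    using assms abs_triangle_ineq[of "r * (x * x)" "s * (x * y)"]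
      abs_triangle_ineq4[of "r * (x * x) + s * (x * y)" r]
    by linarith
qed

lemma integral_std_normal_positive_wedge:
  assumes "0 < r"
  shows "(\<integral>x. indicator {0..} x * indicator {0..} (r * x + t) * (x * (r * x + t) - r) \<partial>std_normal_distribution)
    = std_normal_density 0 * max 0 t"
proof -
  define m where "m = max 0 (- t / r)"
  have wedge: "indicator {0..} x * indicator {0..} (r * x + t) = (indicator {m..} x :: real)" for x
    using assms by (auto simp: indicator_def m_def field_simps)
  have "(\<integral>x. indicator {0..} x * indicator {0..} (r * x + t) * (x * (r * x + t) - r) \<partial>std_normal_distribution)
      = (LINT x|lborel. indicator {m..} x * (std_normal_density x * (x * (r * x + t) - r)))"
    by (subst integral_density) (auto simp: wedge[symmetric] algebra_simps)
  also have "\<dots> = std_normal_density m * (r * m + t)"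
    by (rule integral_Ici_std_normal_density_quadratic)
  also have "\<dots> = std_normal_density 0 * max 0 t"
    using assms by (auto simp: m_def max_def field_simps)
  finally show ?thesis .
qed

section \<open>Pairs of standard Gaussian variables\<close>

locale std_gaussian_pair = prob_space M for M :: "'a measure" +
  fixes X Y :: "'a \<Rightarrow> real" and \<rho> :: real
  assumes gaussian_lin_comb: "\<And>u v. gaussian_rv M (\<lambda>\<omega>. u * X \<omega> + v * Y \<omega>)"
    and mean_X: "(\<integral>\<omega>. X \<omega> \<partial>M) = 0" and mean_Y: "(\<integral>\<omega>. Y \<omega> \<partial>M) = 0"
    and var_X: "(\<integral>\<omega>. X \<omega> * X \<omega> \<partial>M) = 1" and var_Y: "(\<integral>\<omega>. Y \<omega> * Y \<omega> \<partial>M) = 1"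
    and cov_XY: "(\<integral>\<omega>. X \<omega> * Y \<omega> \<partial>M) = \<rho>"
begin

lemma gaussian_X: "gaussian_rv M X"
  using gaussian_lin_comb[of 1 0] by simp

lemma gaussian_Y: "gaussian_rv M Y"
  using gaussian_lin_comb[of 0 1] by simp

lemma X_measurable[measurable]: "X \<in> borel_measurable M"
  using gaussian_X by (simp add: gaussian_rv_def)

lemma Y_measurable[measurable]: "Y \<in> borel_measurable M"
  using gaussian_Y by (simp add: gaussian_rv_def)

lemma integrable_XX: "integrable M (\<lambda>\<omega>. X \<omega> * X \<omega>)"
  using var_X not_integrable_integral_eq by fastforce

lemma integrable_YY: "integrable M (\<lambda>\<omega>. Y \<omega> * Y \<omega>)"
  using var_Y not_integrable_integral_eq by fastforce

lemma integrable_XY: "integrable M (\<lambda>\<omega>. X \<omega> * Y \<omega>)"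
  by (rule integrable_mult_of_square_integrable) (simp_all add: integrable_XX integrable_YY)

lemma integrable_X: "integrable M X"
  by (rule square_integrable_imp_integrable) (simp_all add: power2_eq_square integrable_XX)

lemma integrable_Y: "integrable M Y"
  by (rule square_integrable_imp_integrable) (simp_all add: power2_eq_square integrable_YY)

lemma distr_X: "distr M lborel X = std_normal_distribution"
  using gaussian_rv_std_normal[OF prob_space_axioms gaussian_X mean_X var_X]
  by (simp add: distributed_def)

lemma distr_Y: "distr M lborel Y = std_normal_distribution"
  using gaussian_rv_std_normal[OF prob_space_axioms gaussian_Y mean_Y var_Y]
  by (simp add: distributed_def)

lemma mean_lin_comb: "(\<integral>\<omega>. u * X \<omega> + v * Y \<omega> \<partial>M) = 0"
  using integrable_X integrable_Y mean_X mean_Y by simp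

lemma integrable_square_lin_comb:
  "integrable M (\<lambda>\<omega>. (u * X \<omega> + v * Y \<omega>) * (u * X \<omega> + v * Y \<omega>))"
proof -
  have "integrable M (\<lambda>\<omega>. u\<^sup>2 * (X \<omega> * X \<omega>) + (2 * u * v) * (X \<omega> * Y \<omega>) + v\<^sup>2 * (Y \<omega> * Y \<omega>))"
    using integrable_XX integrable_YY integrable_XY by simp
  moreover have "(\<lambda>\<omega>. (u * X \<omega> + v * Y \<omega>) * (u * X \<omega> + v * Y \<omega>))
      = (\<lambda>\<omega>. u\<^sup>2 * (X \<omega> * X \<omega>) + (2 * u * v) * (X \<omega> * Y \<omega>) + v\<^sup>2 * (Y \<omega> * Y \<omega>))"
    by (rule ext) (simp add: algebra_simps power2_eq_square)
  ultimately show ?thesis by simp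
qed

lemma second_moment_lin_comb:
  "(\<integral>\<omega>. (u * X \<omega> + v * Y \<omega>) * (u * X \<omega> + v * Y \<omega>) \<partial>M) = u\<^sup>2 + 2 * \<rho> * u * v + v\<^sup>2"
proof -
  have "(\<integral>\<omega>. (u * X \<omega> + v * Y \<omega>) * (u * X \<omega> + v * Y \<omega>) \<partial>M)
      = (\<integral>\<omega>. u\<^sup>2 * (X \<omega> * X \<omega>) + (2 * u * v) * (X \<omega> * Y \<omega>) + v\<^sup>2 * (Y \<omega> * Y \<omega>) \<partial>M)"
    by (rule Bochner_Integration.integral_cong) (auto simp: algebra_simps power2_eq_square)
  also have "\<dots> = u\<^sup>2 + 2 * \<rho> * u * v + v\<^sup>2"
    using integrable_XX integrable_YY integrable_XY by (simp add: var_X var_Y cov_XY)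
  finally show ?thesis .
qed

lemma correlation_le_1: "\<rho> \<le> 1"
proof -
  have "0 \<le> (\<integral>\<omega>. (1 * X \<omega> + (-1) * Y \<omega>) * (1 * X \<omega> + (-1) * Y \<omega>) \<partial>M)"
    by (rule Bochner_Integration.integral_nonneg) simp
  then show ?thesis unfolding second_moment_lin_comb by simp
qed

lemma AE_eq_if_correlation_1:
  assumes "\<rho> = 1"
  shows "AE \<omega> in M. Y \<omega> = X \<omega>"
proof -
  let ?D = "\<lambda>\<omega>. (1 * X \<omega> + (-1) * Y \<omega>) * (1 * X \<omega> + (-1) * Y \<omega>)"
  have "integrable M ?D" by (rule integrable_square_lin_comb)
  moreover have "(\<integral>\<omega>. ?D \<omega> \<partial>M) = 0"
    unfolding second_moment_lin_comb using assms by simp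
  ultimately have "AE \<omega> in M. ?D \<omega> = 0"
    by (simp add: integral_nonneg_eq_0_iff_AE)
  then show ?thesis by eventually_elim simp
qed

lemma integral_fun_X:
  assumes [measurable]: "h \<in> borel_measurable borel"
  shows "(\<integral>\<omega>. h (X \<omega>) \<partial>M) = (LINT x|lborel. std_normal_density x * h x)"
proof -
  have "(\<integral>\<omega>. h (X \<omega>) \<partial>M) = integral\<^sup>L (distr M lborel X) h"
    by (rule integral_distr[symmetric]) auto
  then show ?thesis by (simp add: distr_X integral_density)
qed

lemma integral_positive_X: "(\<integral>\<omega>. indicator {0..} (X \<omega>) * X \<omega> \<partial>M) = std_normal_density 0"
proof -
  have "(\<integral>\<omega>. indicator {0..} (X \<omega>) * X \<omega> \<partial>M)
      = (LINT x|lborel. indicator {0..} x * (std_normal_density x * (x * (0 * x + 1) - 0)))"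
    by (subst integral_fun_X) (auto simp: mult_ac)
  also have "\<dots> = std_normal_density 0"
    using integral_Ici_std_normal_density_quadratic[of 0 0 1] by simp
  finally show ?thesis .
qed

lemma integral_positive_X_square:
  "(\<integral>\<omega>. indicator {0..} (X \<omega>) * (X \<omega> * X \<omega>) \<partial>M) = (\<integral>\<omega>. indicator {0..} (X \<omega>) \<partial>M)"
proof -
  have "(\<integral>\<omega>. indicator {0..} (X \<omega>) * (X \<omega> * X \<omega> - 1) \<partial>M)
      = (LINT x|lborel. indicator {0..} x * (std_normal_density x * (x * (1 * x + 0) - 1)))"
    by (subst integral_fun_X) (auto simp: mult_ac)
  also have "\<dots> = 0"
    using integral_Ici_std_normal_density_quadratic[of 0 1 0] by simp
  finally have "(\<integral>\<omega>. indicator {0..} (X \<omega>) * (X \<omega> * X \<omega> - 1) \<partial>M) = 0" .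
  moreover have "integrable M (\<lambda>\<omega>. indicator {0..} (X \<omega>) :: real)"
    by (rule integrable_abs_bounded[where B = 1]) (simp_all add: indicator_def)
  moreover have "integrable M (\<lambda>\<omega>. indicator {0..} (X \<omega>) * (X \<omega> * X \<omega>))"
    by (rule Bochner_Integration.integrable_bound[OF integrable_XX]) (auto simp: indicator_def)
  ultimately show ?thesis by (simp add: right_diff_distrib)
qed

end

locale uncorrelated_std_gaussian_pair = std_gaussian_pair M X Y 0
  for M :: "'a measure" and X Y :: "'a \<Rightarrow> real"
begin

lemma char_lin_comb:
  "(CLINT \<omega>|M. iexp (u * X \<omega> + v * Y \<omega>)) = exp (- (u\<^sup>2 + v\<^sup>2) / 2)"
proof (cases "u = 0 \<and> v = 0")
  case True
  then show ?thesis by (simp add: prob_space)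
next
  case False
  define \<sigma> where "\<sigma> = sqrt (u\<^sup>2 + v\<^sup>2)"
  have "0 < u\<^sup>2 + v\<^sup>2" using False by (auto simp: sum_power2_gt_zero_iff)
  then have "0 < \<sigma>" and \<sigma>_sq: "\<sigma>\<^sup>2 = u\<^sup>2 + v\<^sup>2" unfolding \<sigma>_def by auto
  have "distributed M lborel (\<lambda>\<omega>. (u / \<sigma>) * X \<omega> + (v / \<sigma>) * Y \<omega>) std_normal_density"
  proof (rule gaussian_rv_std_normal[OF prob_space_axioms gaussian_lin_comb mean_lin_comb])
    show "(\<integral>\<omega>. ((u / \<sigma>) * X \<omega> + (v / \<sigma>) * Y \<omega>) * ((u / \<sigma>) * X \<omega> + (v / \<sigma>) * Y \<omega>) \<partial>M) = 1"
      unfolding second_moment_lin_comb using False \<open>0 < \<sigma>\<close> \<sigma>_sq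
      by (simp add: power_divide add_divide_distrib[symmetric])
  qed
  from char_std_normal_rv[OF this, of \<sigma>] \<open>0 < \<sigma>\<close> \<sigma>_sq show ?thesis
    by (simp add: distrib_left)
qed

lemma integral_cos_lin_comb:
  "(\<integral>\<omega>. cos (u * X \<omega> + v * Y \<omega> + a) \<partial>M) = cos a * exp (- (u\<^sup>2 + v\<^sup>2) / 2)"
  and integral_sin_lin_comb:
  "(\<integral>\<omega>. sin (u * X \<omega> + v * Y \<omega> + a) \<partial>M) = sin a * exp (- (u\<^sup>2 + v\<^sup>2) / 2)"
proof -
  let ?f = "\<lambda>\<omega>. cis (u * X \<omega> + v * Y \<omega> + a)"
  have int: "integrable M ?f"
    using integrable_iexp[of "\<lambda>\<omega>. u * X \<omega> + v * Y \<omega> + a"] by (simp add: cis_conv_exp)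
  have "(CLINT \<omega>|M. ?f \<omega>) = (CLINT \<omega>|M. cis a * cis (u * X \<omega> + v * Y \<omega>))"
    by (simp add: cis_mult add_ac)
  also have "\<dots> = cis a * exp (- (u\<^sup>2 + v\<^sup>2) / 2)"
    using char_lin_comb by (simp add: cis_conv_exp)
  finally have char: "(CLINT \<omega>|M. ?f \<omega>) = cis a * exp (- (u\<^sup>2 + v\<^sup>2) / 2)" .
  show "(\<integral>\<omega>. cos (u * X \<omega> + v * Y \<omega> + a) \<partial>M) = cos a * exp (- (u\<^sup>2 + v\<^sup>2) / 2)"
    using integral_Re[OF int] char by simp
  show "(\<integral>\<omega>. sin (u * X \<omega> + v * Y \<omega> + a) \<partial>M) = sin a * exp (- (u\<^sup>2 + v\<^sup>2) / 2)"
    using integral_Im[OF int] char by simp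
qed

lemma integral_cos_X: "(\<integral>\<omega>. cos (u * X \<omega>) \<partial>M) = exp (- u\<^sup>2 / 2)"
  using integral_cos_lin_comb[of u 0 0] by simp

lemma integral_sin_X: "(\<integral>\<omega>. sin (u * X \<omega>) \<partial>M) = 0"
  using integral_sin_lin_comb[of u 0 0] by simp

lemma integral_cos_X_mult_one_plus_cos_Y:
  "(\<integral>\<omega>. cos (u * X \<omega>) * (1 + cos (v * Y \<omega> + a)) \<partial>M)
    = exp (- u\<^sup>2 / 2) * (1 + cos a * exp (- v\<^sup>2 / 2))"
proof -
  have "(\<integral>\<omega>. cos (u * X \<omega>) * (1 + cos (v * Y \<omega> + a)) \<partial>M)
      = (\<integral>\<omega>. cos (u * X \<omega>) \<partial>M) + ((\<integral>\<omega>. cos (u * X \<omega> + (- v) * Y \<omega> + (- a)) \<partial>M)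
        + (\<integral>\<omega>. cos (u * X \<omega> + v * Y \<omega> + a) \<partial>M)) / 2"
    by (simp add: distrib_left cos_times_cos algebra_simps)
  also have "\<dots> = exp (- u\<^sup>2 / 2) + cos a * exp (- (u\<^sup>2 + v\<^sup>2) / 2)"
    by (simp only: integral_cos_X integral_cos_lin_comb) simp
  also have "\<dots> = exp (- u\<^sup>2 / 2) * (1 + cos a * exp (- v\<^sup>2 / 2))"
  proof -
    have "exp (- (u\<^sup>2 + v\<^sup>2) / 2) = exp (- u\<^sup>2 / 2) * exp (- v\<^sup>2 / 2)"
      by (subst exp_add[symmetric]) (simp add: field_simps)
    then show ?thesis by (simp add: algebra_simps)
  qed
  finally show ?thesis .
qed

lemma integral_sin_X_mult_one_plus_cos_Y:
  "(\<integral>\<omega>. sin (u * X \<omega>) * (1 + cos (v * Y \<omega> + a)) \<partial>M) = 0"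
proof -
  have "(\<integral>\<omega>. sin (u * X \<omega>) * (1 + cos (v * Y \<omega> + a)) \<partial>M)
      = (\<integral>\<omega>. sin (u * X \<omega>) \<partial>M) + ((\<integral>\<omega>. sin (u * X \<omega> + v * Y \<omega> + a) \<partial>M)
        + (\<integral>\<omega>. sin (u * X \<omega> + (- v) * Y \<omega> + (- a)) \<partial>M)) / 2"
    by (simp add: distrib_left sin_times_cos algebra_simps)
  also have "\<dots> = 0"
    by (simp only: integral_sin_X integral_sin_lin_comb) simp
  finally show ?thesis .
qed

lemma integral_indicator_X_cos_Y:
  assumes [measurable]: "A \<in> sets borel" and "0 \<le> cos a"
  shows "(\<integral>\<omega>. indicator A (X \<omega>) * cos (v * Y \<omega> + a) \<partial>M)
       = cos a * exp (- v\<^sup>2 / 2) * (\<integral>\<omega>. indicator A (X \<omega>) \<partial>M)"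
proof -
  define c where "c = 1 + cos a * exp (- v\<^sup>2 / 2)"
  have "1 \<le> c" using assms(2) by (simp add: c_def)
  define g where "g \<omega> = (1 + cos (v * Y \<omega> + a)) / c" for \<omega>
  have [measurable]: "g \<in> borel_measurable M" unfolding g_def by measurable
  have g_nonneg: "0 \<le> g \<omega>" for \<omega>
    unfolding g_def using cos_ge_minus_one[of "v * Y \<omega> + a"] \<open>1 \<le> c\<close>
    by (intro divide_nonneg_pos) linarith+
  have "(\<integral>\<omega>. g \<omega> * indicator A (X \<omega>) \<partial>M) = (\<integral>\<omega>. indicator A (X \<omega>) \<partial>M)"
  proof (rule reweighted_std_normal_indicator[OF prob_space_axioms X_measurable _ distr_X g_nonneg])
    fix u
    have "(\<integral>\<omega>. g \<omega> * cos (u * X \<omega>) \<partial>M) = (\<integral>\<omega>. cos (u * X \<omega>) * (1 + cos (v * Y \<omega> + a)) / c \<partial>M)"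
      by (rule Bochner_Integration.integral_cong) (simp_all add: g_def)
    then show "(\<integral>\<omega>. g \<omega> * cos (u * X \<omega>) \<partial>M) = exp (- u\<^sup>2 / 2)"
      using \<open>1 \<le> c\<close> by (simp add: integral_cos_X_mult_one_plus_cos_Y c_def)
    have "(\<integral>\<omega>. g \<omega> * sin (u * X \<omega>) \<partial>M) = (\<integral>\<omega>. sin (u * X \<omega>) * (1 + cos (v * Y \<omega> + a)) / c \<partial>M)"
      by (rule Bochner_Integration.integral_cong) (simp_all add: g_def)
    then show "(\<integral>\<omega>. g \<omega> * sin (u * X \<omega>) \<partial>M) = 0"
      by (simp add: integral_sin_X_mult_one_plus_cos_Y)
  qed (simp_all add: g_def)
  moreover have "integrable M (\<lambda>\<omega>. indicator A (X \<omega>) :: real)"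
    by (rule integrable_abs_bounded[where B = 1]) (simp_all add: indicator_def)
  moreover have "integrable M (\<lambda>\<omega>. indicator A (X \<omega>) * cos (v * Y \<omega> + a))"
    by (rule integrable_abs_bounded[where B = 1]) (simp_all add: indicator_def abs_cos_le_one)
  ultimately show ?thesis
    using \<open>1 \<le> c\<close> by (simp add: g_def c_def distrib_left field_simps)
qed

lemma integral_indicator_X_indicator_Y:
  assumes [measurable]: "A \<in> sets borel" "B \<in> sets borel"
  shows "(\<integral>\<omega>. indicator A (X \<omega>) * indicator B (Y \<omega>) \<partial>M)
       = (\<integral>\<omega>. indicator A (X \<omega>) \<partial>M) * (\<integral>\<omega>. indicator B (Y \<omega>) \<partial>M :: real)"
proof -
  define p where "p = (\<integral>\<omega>. indicator A (X \<omega>) \<partial>M :: real)"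
  have int_A: "integrable M (\<lambda>\<omega>. indicator A (X \<omega>) :: real)"
    by (rule integrable_abs_bounded[where B = 1]) (simp_all add: indicator_def)
  have int_AB: "integrable M (\<lambda>\<omega>. indicator A (X \<omega>) * indicator B (Y \<omega>) :: real)"
    by (rule integrable_abs_bounded[where B = 1]) (simp_all add: indicator_def)
  have "0 \<le> p" unfolding p_def by (rule Bochner_Integration.integral_nonneg) simp
  show ?thesis
  proof (cases "p = 0")
    case True
    have "(\<integral>\<omega>. indicator A (X \<omega>) * indicator B (Y \<omega>) \<partial>M) \<le> p"
      unfolding p_def by (rule integral_mono[OF int_AB int_A]) (simp add: indicator_def)
    moreover have "0 \<le> (\<integral>\<omega>. indicator A (X \<omega>) * indicator B (Y \<omega>) \<partial>M :: real)"
      by (rule Bochner_Integration.integral_nonneg) simp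
    ultimately have "(\<integral>\<omega>. indicator A (X \<omega>) * indicator B (Y \<omega>) \<partial>M :: real) = 0"
      using True by linarith
    then show ?thesis using True by (simp add: p_def)
  next
    case False
    with \<open>0 \<le> p\<close> have "0 < p" by simp
    define g where "g \<omega> = indicator A (X \<omega>) / p" for \<omega>
    have "(\<integral>\<omega>. g \<omega> * indicator B (Y \<omega>) \<partial>M) = (\<integral>\<omega>. indicator B (Y \<omega>) \<partial>M)"
    proof (rule reweighted_std_normal_indicator[OF prob_space_axioms Y_measurable _ distr_Y])
      show "0 \<le> g \<omega>" for \<omega> using \<open>0 < p\<close> by (simp add: g_def)
      show "integrable M g" unfolding g_def using int_A by simp
      fix u
      show "(\<integral>\<omega>. g \<omega> * cos (u * Y \<omega>) \<partial>M) = exp (- u\<^sup>2 / 2)"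
        using integral_indicator_X_cos_Y[of A 0 u] \<open>0 < p\<close> by (simp add: g_def p_def)
      have "sin (u * Y \<omega>) = cos (u * Y \<omega> + - (pi / 2))" for \<omega>
        by (simp add: cos_diff)
      then show "(\<integral>\<omega>. g \<omega> * sin (u * Y \<omega>) \<partial>M) = 0"
        using integral_indicator_X_cos_Y[of A "- (pi / 2)" u] by (simp add: g_def)
    qed (simp_all add: g_def)
    then show ?thesis using \<open>0 < p\<close> by (simp add: g_def p_def field_simps)
  qed
qed

text \<open>The pair is ordered as \<open>(Y, X)\<close> so that Fubini's theorem integrates over \<open>X\<close> innermost.\<close>

lemma distr_Y_X: "distr M (lborel \<Otimes>\<^sub>M lborel) (\<lambda>\<omega>. (Y \<omega>, X \<omega>))
    = std_normal_distribution \<Otimes>\<^sub>M std_normal_distribution"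
proof (rule pair_measure_eqI[symmetric])
  interpret N: prob_space std_normal_distribution
    using real_dist_normal_dist by (simp add: real_distribution_def)
  show "sigma_finite_measure std_normal_distribution"
    by (rule N.sigma_finite_measure_axioms)
  then show "sigma_finite_measure std_normal_distribution" .
  have "sets (std_normal_distribution \<Otimes>\<^sub>M std_normal_distribution) = sets (lborel \<Otimes>\<^sub>M (lborel :: real measure))"
    by (rule sets_pair_measure_cong) simp_all
  then show "sets (std_normal_distribution \<Otimes>\<^sub>M std_normal_distribution)
      = sets (distr M (lborel \<Otimes>\<^sub>M lborel) (\<lambda>\<omega>. (Y \<omega>, X \<omega>)))"
    by simp
  fix A B assume "A \<in> sets std_normal_distribution" "B \<in> sets std_normal_distribution"
  then have A[measurable]: "A \<in> sets borel" and B[measurable]: "B \<in> sets borel" by auto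
  have law: "emeasure std_normal_distribution S = ennreal (\<integral>\<omega>. indicator S (Z \<omega>) \<partial>M)"
    if [measurable]: "S \<in> sets borel" and law_Z: "distr M lborel Z = std_normal_distribution"
      and [measurable]: "Z \<in> borel_measurable M" for S Z
  proof -
    have "emeasure std_normal_distribution S = emeasure M (Z -` S \<inter> space M)"
      by (simp flip: law_Z add: emeasure_distr)
    also have "\<dots> = ennreal (\<integral>\<omega>. indicator (Z -` S \<inter> space M) \<omega> \<partial>M)"
      by (simp add: emeasure_eq_integral_indicator)
    also have "\<dots> = ennreal (\<integral>\<omega>. indicator S (Z \<omega>) \<partial>M)"
      by (intro arg_cong[where f = ennreal] Bochner_Integration.integral_cong) (auto simp: indicator_def)
    finally show ?thesis .
  qed
  have "emeasure std_normal_distribution A * emeasure std_normal_distribution B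
      = ennreal (\<integral>\<omega>. indicator B (X \<omega>) \<partial>M) * ennreal (\<integral>\<omega>. indicator A (Y \<omega>) \<partial>M)"
    by (simp add: law[OF A distr_Y Y_measurable] law[OF B distr_X X_measurable] mult.commute)
  also have "\<dots> = ennreal (\<integral>\<omega>. indicator B (X \<omega>) * indicator A (Y \<omega>) \<partial>M)"
    by (simp add: integral_indicator_X_indicator_Y ennreal_mult)
  also have "\<dots> = ennreal (\<integral>\<omega>. indicator ((\<lambda>\<omega>. (Y \<omega>, X \<omega>)) -` (A \<times> B) \<inter> space M) \<omega> \<partial>M)"
    by (intro arg_cong[where f = ennreal] Bochner_Integration.integral_cong) (auto simp: indicator_def)
  also have "\<dots> = emeasure (distr M (lborel \<Otimes>\<^sub>M lborel) (\<lambda>\<omega>. (Y \<omega>, X \<omega>))) (A \<times> B)"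
    by (simp add: emeasure_distr emeasure_eq_integral_indicator)
  finally show "emeasure std_normal_distribution A * emeasure std_normal_distribution B
      = emeasure (distr M (lborel \<Otimes>\<^sub>M lborel) (\<lambda>\<omega>. (Y \<omega>, X \<omega>))) (A \<times> B)" .
qed

lemma integral_positive_wedge:
  assumes "0 < r" "0 < s"
  shows "(\<integral>\<omega>. indicator {0..} (X \<omega>) * indicator {0..} (r * X \<omega> + s * Y \<omega>)
      * (X \<omega> * (r * X \<omega> + s * Y \<omega>) - r) \<partial>M) = s * (std_normal_density 0)\<^sup>2"
proof -
  let ?N = std_normal_distribution
  interpret N: prob_space ?N
    using real_dist_normal_dist by (simp add: real_distribution_def)
  interpret P: pair_prob_space ?N ?N ..
  define G where "G p = indicator {0..} (snd p) * indicator {0..} (r * snd p + s * fst p)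
      * (snd p * (r * snd p + s * fst p) - r)" for p :: "real \<times> real"
  have [measurable]: "G \<in> borel_measurable (lborel \<Otimes>\<^sub>M lborel)" unfolding G_def by measurable
  have "integrable M (\<lambda>\<omega>. G (Y \<omega>, X \<omega>))"
  proof (rule Bochner_Integration.integrable_bound[of _ "\<lambda>\<omega>. r * (X \<omega> * X \<omega>) + s * \<bar>X \<omega> * Y \<omega>\<bar> + r"])
    show "integrable M (\<lambda>\<omega>. r * (X \<omega> * X \<omega>) + s * \<bar>X \<omega> * Y \<omega>\<bar> + r)"
      using integrable_XX integrable_XY by simp
    have "\<bar>G (Y \<omega>, X \<omega>)\<bar> \<le> r * (X \<omega> * X \<omega>) + s * \<bar>X \<omega> * Y \<omega>\<bar> + r" for \<omega>
      unfolding G_def using abs_positive_wedge_integrand_le[OF assms] by simp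
    then show "AE \<omega> in M. norm (G (Y \<omega>, X \<omega>)) \<le> norm (r * (X \<omega> * X \<omega>) + s * \<bar>X \<omega> * Y \<omega>\<bar> + r)"
      using assms by (intro AE_I2) (simp add: abs_of_nonneg)
  qed simp
  then have "integrable (?N \<Otimes>\<^sub>M ?N) G"
    by (simp add: distr_Y_X[symmetric] integrable_distr_eq)
  have "(\<integral>\<omega>. G (Y \<omega>, X \<omega>) \<partial>M) = integral\<^sup>L (distr M (lborel \<Otimes>\<^sub>M lborel) (\<lambda>\<omega>. (Y \<omega>, X \<omega>))) G"
    by (rule integral_distr[symmetric]) auto
  also have "\<dots> = (\<integral>w. (\<integral>x. G (w, x) \<partial>?N) \<partial>?N)"
    by (simp add: distr_Y_X P.integral_fst'[OF \<open>integrable (?N \<Otimes>\<^sub>M ?N) G\<close>])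
  also have "\<dots> = (\<integral>w. std_normal_density 0 * max 0 (s * w) \<partial>?N)"
    using integral_std_normal_positive_wedge[OF \<open>0 < r\<close>] by (simp add: G_def)
  also have "\<dots> = (LINT w|lborel. std_normal_density w * (std_normal_density 0 * max 0 (s * w)))"
    by (subst integral_density) auto
  also have "\<dots> = (LINT w|lborel. s * std_normal_density 0 *
      (indicator {0..} w * (std_normal_density w * (w * (0 * w + 1) - 0))))"
    by (rule Bochner_Integration.integral_cong)
      (use \<open>0 < s\<close> in \<open>auto simp: max_def indicator_def zero_le_mult_iff\<close>)
  also have "\<dots> = s * (std_normal_density 0)\<^sup>2"
    by (simp only: integral_mult_right_zero integral_Ici_std_normal_density_quadratic)
      (simp add: power2_eq_square)
  finally show ?thesis by (simp add: G_def)
qed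

end

lemma one_minus_less_sqrt_one_minus_square:
  fixes \<rho> :: real
  assumes "99/100 < \<rho>" "\<rho> < 1"
  shows "1 - \<rho> < sqrt (1 - \<rho>\<^sup>2) / (2 * pi)"
proof -
  have "pi\<^sup>2 \<le> 4\<^sup>2" using pi_less_4 pi_gt_zero by (intro power_mono) auto
  have "(2 * pi * (1 - \<rho>))\<^sup>2 = (4 * pi\<^sup>2) * ((1 - \<rho>) * (1 - \<rho>))"
    by (simp add: power2_eq_square algebra_simps)
  also have "\<dots> \<le> 64 * ((1 - \<rho>) * (1 - \<rho>))"
    using \<open>pi\<^sup>2 \<le> 4\<^sup>2\<close> by (intro mult_right_mono) simp_all
  also have "\<dots> = 64 * (1 - \<rho>) * (1 - \<rho>)" by simp
  also have "\<dots> < (1 + \<rho>) * (1 - \<rho>)"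
    using assms by (intro mult_strict_right_mono) auto
  also have "\<dots> = 1 - \<rho>\<^sup>2" by (simp add: power2_eq_square algebra_simps)
  finally have "2 * pi * (1 - \<rho>) < sqrt (1 - \<rho>\<^sup>2)"
    using assms by (intro real_less_rsqrt) simp
  then show ?thesis by (simp add: field_simps)
qed

context std_gaussian_pair
begin

lemma uncorrelated_std_gaussian_pair_residual:
  assumes "\<rho>\<^sup>2 < 1"
  shows "uncorrelated_std_gaussian_pair M X (\<lambda>\<omega>. (Y \<omega> - \<rho> * X \<omega>) / sqrt (1 - \<rho>\<^sup>2))"
proof -
  define s where "s = sqrt (1 - \<rho>\<^sup>2)"
  have "0 < s" and s_sq: "s\<^sup>2 = 1 - \<rho>\<^sup>2" using assms by (auto simp: s_def)
  define W where "W \<omega> = (Y \<omega> - \<rho> * X \<omega>) / s" for \<omega>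
  have "uncorrelated_std_gaussian_pair M X W"
  proof unfold_locales
    show "gaussian_rv M (\<lambda>\<omega>. u * X \<omega> + v * W \<omega>)" for u v
    proof -
      have "(\<lambda>\<omega>. u * X \<omega> + v * W \<omega>) = (\<lambda>\<omega>. (u - v * \<rho> / s) * X \<omega> + (v / s) * Y \<omega>)"
        using \<open>0 < s\<close> by (auto simp: W_def field_simps)
      then show ?thesis using gaussian_lin_comb[of "u - v * \<rho> / s" "v / s"] by (simp only:)
    qed
    show "(\<integral>\<omega>. W \<omega> \<partial>M) = 0"
      using integrable_X integrable_Y by (simp add: W_def mean_X mean_Y)
    have "(\<integral>\<omega>. W \<omega> * W \<omega> \<partial>M)
        = (\<integral>\<omega>. (Y \<omega> * Y \<omega> - 2 * \<rho> * (X \<omega> * Y \<omega>) + \<rho>\<^sup>2 * (X \<omega> * X \<omega>)) / s\<^sup>2 \<partial>M)"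
      by (rule Bochner_Integration.integral_cong) (auto simp: W_def power2_eq_square field_simps)
    also have "\<dots> = 1"
      using integrable_XX integrable_YY integrable_XY s_sq assms
      by (simp add: var_X var_Y cov_XY power2_eq_square)
    finally show "(\<integral>\<omega>. W \<omega> * W \<omega> \<partial>M) = 1" .
    have "(\<integral>\<omega>. X \<omega> * W \<omega> \<partial>M) = (\<integral>\<omega>. (X \<omega> * Y \<omega> - \<rho> * (X \<omega> * X \<omega>)) / s \<partial>M)"
      by (rule Bochner_Integration.integral_cong) (auto simp: W_def field_simps)
    then show "(\<integral>\<omega>. X \<omega> * W \<omega> \<partial>M) = 0"
      using integrable_XX integrable_XY by (simp add: var_X cov_XY)
  qed (simp_all add: mean_X var_X)
  then show ?thesis by (simp only: W_def[abs_def] s_def)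
qed

lemma integral_positive_quadrant_XY:
  assumes "0 < \<rho>" "\<rho> < 1"
  shows "(\<integral>\<omega>. indicator {0..} (X \<omega>) * indicator {0..} (Y \<omega>) * (X \<omega> * Y \<omega>) \<partial>M)
    = sqrt (1 - \<rho>\<^sup>2) / (2 * pi) + \<rho> * (\<integral>\<omega>. indicator {0..} (X \<omega>) * indicator {0..} (Y \<omega>) \<partial>M)"
proof -
  define s where "s = sqrt (1 - \<rho>\<^sup>2)"
  have "\<rho> * \<rho> < 1 * 1" using assms by (intro mult_strict_mono) auto
  then have "\<rho>\<^sup>2 < 1" by (simp add: power2_eq_square)
  then have "0 < s" by (simp add: s_def)
  interpret U: uncorrelated_std_gaussian_pair M X "\<lambda>\<omega>. (Y \<omega> - \<rho> * X \<omega>) / s"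
    unfolding s_def by (rule uncorrelated_std_gaussian_pair_residual) fact
  have "(\<integral>\<omega>. indicator {0..} (X \<omega>) * indicator {0..} (Y \<omega>) * (X \<omega> * Y \<omega> - \<rho>) \<partial>M)
      = (\<integral>\<omega>. indicator {0..} (X \<omega>) * indicator {0..} (\<rho> * X \<omega> + s * ((Y \<omega> - \<rho> * X \<omega>) / s))
          * (X \<omega> * (\<rho> * X \<omega> + s * ((Y \<omega> - \<rho> * X \<omega>) / s)) - \<rho>) \<partial>M)"
    using \<open>0 < s\<close> by (intro Bochner_Integration.integral_cong) simp_all
  also have "\<dots> = s * (std_normal_density 0)\<^sup>2"
    by (rule U.integral_positive_wedge[OF \<open>0 < \<rho>\<close> \<open>0 < s\<close>])
  also have "\<dots> = s / (2 * pi)"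
    by (simp add: std_normal_density_def power2_eq_square real_sqrt_mult_self)
  finally have wedge: "(\<integral>\<omega>. indicator {0..} (X \<omega>) * indicator {0..} (Y \<omega>) * (X \<omega> * Y \<omega> - \<rho>) \<partial>M)
      = s / (2 * pi)" .
  have "integrable M (\<lambda>\<omega>. indicator {0..} (X \<omega>) * indicator {0..} (Y \<omega>) :: real)"
    by (rule integrable_abs_bounded[where B = 1]) (simp_all add: indicator_def)
  moreover have "integrable M (\<lambda>\<omega>. indicator {0..} (X \<omega>) * indicator {0..} (Y \<omega>) * (X \<omega> * Y \<omega>))"
    by (rule Bochner_Integration.integrable_bound[OF integrable_XY]) (auto simp: indicator_def)
  ultimately show ?thesis
    using wedge by (simp add: right_diff_distrib s_def algebra_simps)
qed

lemma cond_exp_XY_positive_quadrant_gt_1: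
  assumes "99/100 < \<rho>" "\<rho> < 1"
  shows "1 < cond_exp_ev M (\<lambda>\<omega>. X \<omega> * Y \<omega>) {\<omega>\<in>space M. 0 \<le> X \<omega> \<and> 0 \<le> Y \<omega>}"
proof -
  define S where "S = {\<omega>\<in>space M. 0 \<le> X \<omega> \<and> 0 \<le> Y \<omega>}"
  have [measurable]: "S \<in> sets M" unfolding S_def by measurable
  define E where "E = (\<integral>\<omega>. indicator S \<omega> * (X \<omega> * Y \<omega>) \<partial>M)"
  have "measure M S = (\<integral>\<omega>. indicator S \<omega> * 1 \<partial>M)" by simp
  also have "\<dots> = (\<integral>\<omega>. indicator {0..} (X \<omega>) * indicator {0..} (Y \<omega>) * 1 \<partial>M)"
    by (simp only: S_def integral_indicator_positive_quadrant)
  finally have "measure M S = (\<integral>\<omega>. indicator {0..} (X \<omega>) * indicator {0..} (Y \<omega>) \<partial>M)"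
    by simp
  then have E_eq: "E = sqrt (1 - \<rho>\<^sup>2) / (2 * pi) + \<rho> * measure M S"
    using assms by (simp add: E_def S_def integral_indicator_positive_quadrant integral_positive_quadrant_XY)
  have "(1 - \<rho>) * measure M S \<le> 1 - \<rho>"
    using assms by (simp add: mult_left_le)
  then have "measure M S < E"
    using one_minus_less_sqrt_one_minus_square[OF assms] E_eq by (simp add: algebra_simps)
  moreover from this have "0 < measure M S"
    using measure_nonneg[of M S]
    by (intro measure_pos_if_integral_indicator_nonzero[where f = "\<lambda>\<omega>. X \<omega> * Y \<omega>"]) (auto simp: E_def)
  ultimately show ?thesis
    by (simp add: cond_exp_ev_def E_def S_def[symmetric])
qed

lemma cond_exp_X_positive_half:
  "0 < cond_exp_ev M X {\<omega>\<in>space M. 0 \<le> X \<omega>}"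
  and cond_exp_XX_positive_half:
  "cond_exp_ev M (\<lambda>\<omega>. X \<omega> * X \<omega>) {\<omega>\<in>space M. 0 \<le> X \<omega>} = 1"
proof -
  define S where "S = {\<omega>\<in>space M. 0 \<le> X \<omega>}"
  have [measurable]: "S \<in> sets M" unfolding S_def by measurable
  have ind_S: "indicator S \<omega> = (indicator {0..} (X \<omega>) :: real)" if "\<omega> \<in> space M" for \<omega>
    using that by (simp add: S_def indicator_def)
  have "(\<integral>\<omega>. indicator S \<omega> * X \<omega> \<partial>M) = std_normal_density 0"
    using integral_positive_X by (simp add: ind_S cong: Bochner_Integration.integral_cong)
  moreover have "0 < std_normal_density 0" by (simp add: std_normal_density_def)
  ultimately have "0 < measure M S"
    by (intro measure_pos_if_integral_indicator_nonzero[where f = X]) auto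
  with \<open>(\<integral>\<omega>. indicator S \<omega> * X \<omega> \<partial>M) = std_normal_density 0\<close> \<open>0 < std_normal_density 0\<close>
  show "0 < cond_exp_ev M X {\<omega>\<in>space M. 0 \<le> X \<omega>}"
    by (simp add: cond_exp_ev_def S_def[symmetric])
  have "(\<integral>\<omega>. indicator S \<omega> * (X \<omega> * X \<omega>) \<partial>M) = (\<integral>\<omega>. indicator S \<omega> \<partial>M)"
    using integral_positive_X_square by (simp add: ind_S cong: Bochner_Integration.integral_cong)
  with \<open>0 < measure M S\<close> show "cond_exp_ev M (\<lambda>\<omega>. X \<omega> * X \<omega>) {\<omega>\<in>space M. 0 \<le> X \<omega>} = 1"
    by (simp add: cond_exp_ev_def S_def[symmetric])
qed

end

section \<open>The mark-mark correlation function\<close>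

lemma positive_definite_constant:
  assumes "\<And>x. f x = c" and "0 \<le> c"
  shows "positive_definite f"
  unfolding positive_definite_def
proof (intro allI)
  fix n :: nat and x :: "nat \<Rightarrow> 'a" and a :: "nat \<Rightarrow> real"
  have "(\<Sum>i<n. \<Sum>j<n. a i * a j * f (x i - x j)) = (\<Sum>i<n. \<Sum>j<n. a i * a j) * c"
    by (simp add: assms(1) sum_distrib_right)
  also have "\<dots> = (\<Sum>i<n. a i) * (\<Sum>i<n. a i) * c"
    by (simp only: sum_product)
  finally show "0 \<le> (\<Sum>i<n. \<Sum>j<n. a i * a j * f (x i - x j))"
    using assms(2) by simp
qed

lemma positive_definite_two_points:
  assumes "positive_definite f"
  shows "f h + f (- h) \<le> 2 * f 0"
proof -
  define x :: "nat \<Rightarrow> 'a" where "x i = (if i = 0 then h else 0)" for i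
  define a :: "nat \<Rightarrow> real" where "a i = (if i = 0 then 1 else -1)" for i
  have "0 \<le> (\<Sum>i<2. \<Sum>j<2. a i * a j * f (x i - x j))"
    using assms unfolding positive_definite_def by (elim allE)
  also have "\<dots> = 2 * f 0 - f h - f (- h)"
    by (simp add: numeral_2_eq_2 a_def x_def)
  finally show ?thesis by simp
qed

lemma gaussian_field_lin_comb:
  assumes "gaussian_field M Z"
  shows "gaussian_rv M (\<lambda>\<omega>. u * Z x \<omega> + v * Z y \<omega>)"
proof (cases "x = y")
  case True
  have "gaussian_rv M (\<lambda>\<omega>. \<Sum>z\<in>{x}. (u + v) * Z z \<omega>)"
    using assms[unfolded gaussian_field_def, rule_format, of "{x}" "\<lambda>_. u + v"] by simp
  with True show ?thesis by (simp add: distrib_right)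
next
  case False
  have "gaussian_rv M (\<lambda>\<omega>. \<Sum>z\<in>{x, y}. (if z = x then u else v) * Z z \<omega>)"
    using assms[unfolded gaussian_field_def, rule_format, of "{x, y}" "\<lambda>z. if z = x then u else v"]
    by simp
  with False show ?thesis by simp
qed

lemma std_gaussian_pair_of_field:
  assumes "prob_space M" and "gaussian_field M Z"
    and "\<And>x. (\<integral>\<omega>. Z x \<omega> \<partial>M) = 0" and "\<And>x. (\<integral>\<omega>. Z x \<omega> * Z x \<omega> \<partial>M) = 1"
  shows "std_gaussian_pair M (Z x) (Z y) (\<integral>\<omega>. Z x \<omega> * Z y \<omega> \<partial>M)"
proof -
  interpret prob_space M by fact
  show ?thesis
    by unfold_locales (simp_all add: assms gaussian_field_lin_comb[OF assms(2)])
qed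

lemma kmm_nonneg:
  assumes "prob_space M"
  shows "0 \<le> kmm M Z h"
proof -
  interpret prob_space M by fact
  have "0 \<le> (\<integral>\<omega>. indicator {\<omega>\<in>space M. 0 \<le> Z 0 \<omega> \<and> 0 \<le> Z h \<omega>} \<omega> * (Z 0 \<omega> * Z h \<omega>) \<partial>M)"
    by (rule Bochner_Integration.integral_nonneg) (auto simp: indicator_def)
  then show ?thesis by (simp add: kmm_def cond_exp_ev_def)
qed

lemma kmm_zero_less_kmm:
  assumes "std_gaussian_pair M (Z 0) (Z h) \<rho>" and "99/100 < \<rho>" "\<rho> < 1"
  shows "kmm M Z 0 < kmm M Z h"
proof -
  interpret std_gaussian_pair M "Z 0" "Z h" \<rho> by fact
  have "0 < (cond_exp_ev M (Z 0) {\<omega>\<in>space M. 0 \<le> Z 0 \<omega>})\<^sup>2"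
    using cond_exp_X_positive_half by simp
  then show ?thesis
    using cond_exp_XY_positive_quadrant_gt_1[OF assms(2,3)]
    by (simp add: kmm_def cond_exp_XX_positive_half divide_strict_right_mono)
qed

lemma kmm_eq_kmm_zero_if_AE_eq:
  assumes [measurable]: "Z 0 \<in> borel_measurable M" "Z h \<in> borel_measurable M"
    and eq: "AE \<omega> in M. Z h \<omega> = Z 0 \<omega>"
  shows "kmm M Z h = kmm M Z 0"
proof -
  let ?S = "\<lambda>v. {\<omega>\<in>space M. 0 \<le> Z 0 \<omega> \<and> 0 \<le> Z v \<omega>}"
  have "(\<integral>\<omega>. indicator (?S h) \<omega> * (Z 0 \<omega> * Z h \<omega>) \<partial>M) = (\<integral>\<omega>. indicator (?S 0) \<omega> * (Z 0 \<omega> * Z 0 \<omega>) \<partial>M)"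
    by (rule integral_cong_AE) (use eq in \<open>auto elim!: eventually_mono simp: indicator_def\<close>)
  moreover have "measure M (?S h) = measure M (?S 0)"
    by (rule measure_eq_AE) (use eq in \<open>auto elim!: eventually_mono\<close>)
  ultimately show ?thesis by (simp add: kmm_def cond_exp_ev_def)
qed

lemma IVT_value_near_1:
  fixes R :: "real \<Rightarrow> real"
  assumes "continuous_on {0..} R" "R 0 = 1" "0 \<le> t" "R t < 1"
  obtains \<tau> where "0 \<le> \<tau>" "99/100 < R \<tau>" "R \<tau> < 1"
proof -
  define \<rho> where "\<rho> = (max (R t) (99/100) + 1) / 2"
  have "99/100 < \<rho>" "\<rho> < 1" "R t \<le> \<rho>" using \<open>R t < 1\<close> by (auto simp: \<rho>_def)
  moreover have "continuous_on {0..t} R" using assms(1) by (rule continuous_on_subset) auto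
  ultimately obtain \<tau> where "0 \<le> \<tau>" "R \<tau> = \<rho>"
    using IVT2'[of R t \<rho> 0] assms(2,3) by auto
  with \<open>99/100 < \<rho>\<close> \<open>\<rho> < 1\<close> show ?thesis using that by simp
qed

theorem proposition4p4:
  fixes M :: "'a measure"
    and Z :: "real ^ 'd \<Rightarrow> 'a \<Rightarrow> real"
    and R :: "real \<Rightarrow> real"
  assumes "prob_space M"
    and "gaussian_field M Z"
    and "\<And>x. (\<integral>\<omega>. Z x \<omega> \<partial>M) = 0"
    and "\<And>x y. (\<integral>\<omega>. Z x \<omega> * Z y \<omega> \<partial>M) = R (norm (x - y))"
    and "R 0 = 1"
    and "continuous_on {0..} R"
  shows "positive_definite (kmm M Z) \<longleftrightarrow> (\<forall>t\<ge>0. R t = 1)"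
proof -
  have pair: "std_gaussian_pair M (Z x) (Z y) (R (norm (x - y)))" for x y
    using std_gaussian_pair_of_field[OF assms(1-3), of x y] assms(4,5) by simp
  have R_le_1: "R t \<le> 1" if "0 \<le> t" for t
  proof -
    obtain x :: "real ^ 'd" where "norm x = t" using vector_choose_size[OF \<open>0 \<le> t\<close>] by blast
    then show ?thesis using std_gaussian_pair.correlation_le_1[OF pair[of x 0]] by simp
  qed
  show ?thesis
  proof
    assume pd: "positive_definite (kmm M Z)"
    show "\<forall>t\<ge>0. R t = 1"
    proof (rule ccontr)
      assume "\<not> (\<forall>t\<ge>0. R t = 1)"
      then obtain t where "0 \<le> t" "R t < 1" using R_le_1 by force
      then obtain \<tau> where "0 \<le> \<tau>" "99/100 < R \<tau>" "R \<tau> < 1"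
        using IVT_value_near_1[OF assms(6,5)] by blast
      obtain h :: "real ^ 'd" where "norm h = \<tau>" using vector_choose_size[OF \<open>0 \<le> \<tau>\<close>] by blast
      then have "kmm M Z 0 < kmm M Z h" "kmm M Z 0 < kmm M Z (- h)"
        using kmm_zero_less_kmm[OF pair[of 0 h]] kmm_zero_less_kmm[OF pair[of 0 "- h"]]
          \<open>99/100 < R \<tau>\<close> \<open>R \<tau> < 1\<close> by simp_all
      with positive_definite_two_points[OF pd, of h] show False by linarith
    qed
  next
    assume "\<forall>t\<ge>0. R t = 1"
    then have "kmm M Z h = kmm M Z 0" for h
      using std_gaussian_pair.AE_eq_if_correlation_1[OF pair[of 0 h]]
        std_gaussian_pair.X_measurable[OF pair[of 0 h]] std_gaussian_pair.Y_measurable[OF pair[of 0 h]]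
      by (intro kmm_eq_kmm_zero_if_AE_eq) simp_all
    then show "positive_definite (kmm M Z)"
      by (rule positive_definite_constant[OF _ kmm_nonneg[OF assms(1)]])
  qed
qed

end
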